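(* For any positive integers $n,p$ and any $k\ge 3$ (possibly $k=\infty$), there exists a path system $S$ with $n$ nodes, $p$ paths, bridge girth $>k$, size $\|S\|=\Theta(\beta(n,p,k))$, and no $2$-cycles.
   Context: A path system is a pair $S=(V,\Pi)$ where $V$ is a finite ground set of nodes and $\Pi$ is a multiset of finite sequences of nodes (paths), each containing each node at most once. The size is $\|S\|=\sum_{\pi\in\Pi}|\pi|$ ($|\pi|$ = number of nodes of $\pi$). Write $x<_\pi y$ if $x,y\in\pi$ and $x$ strictly precedes $y$ in $\pi$. A $b$-bridge consists of $b$ distinct nodes $v_1,\dots,v_b$ and $b$ distinct paths $\pi_1,\dots,\pi_b$ with $v_i<_{\pi_i}v_{i+1}$ for $1\le i\le b-1$ and $v_1<_{\pi_b}v_b$. The bridge girth is the least $b$ for which there is a $b$-bridge ($\infty$ if none). $\beta(n,p,k)$ is the maximum possible size of a path system with $n$ nodes, $p$ paths and bridge girth $>k$. A $2$-cycle in a path system is a pair of nodes $u,v$ and a pair of paths $\pi_1,\pi_2$ with $u<_{\pi_1}v$ and $v<_{\pi_2}u$. *)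

theory Defs
  imports Main "HOL-Library.Extended_Nat"
begin

text \<open>A path system (V, Pi): V a finite set of nodes (taken to be naturals),
  Pi a multiset of paths, represented as a list of paths (the order of the list
  is irrelevant; distinct paths = distinct list positions).\<close>

definition path_system :: "nat set \<Rightarrow> nat list list \<Rightarrow> bool" where
  "path_system V Pi \<longleftrightarrow> finite V \<and> (\<forall>\<pi>\<in>set Pi. distinct \<pi> \<and> set \<pi> \<subseteq> V)"

definition ps_size :: "nat list list \<Rightarrow> nat" where
  "ps_size Pi = sum_list (map length Pi)"

definition precedes :: "nat list \<Rightarrow> nat \<Rightarrow> nat \<Rightarrow> bool" where
  "precedes \<pi> x y \<longleftrightarrow> (\<exists>i j. i < j \<and> j < length \<pi> \<and> \<pi> ! i = x \<and> \<pi> ! j = y)"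

definition has_bridge :: "nat set \<Rightarrow> nat list list \<Rightarrow> nat \<Rightarrow> bool" where
  "has_bridge V Pi b \<longleftrightarrow> b \<ge> 1 \<and> (\<exists>v q.
     inj_on v {..<b} \<and> v ` {..<b} \<subseteq> V \<and>
     inj_on q {..<b} \<and> q ` {..<b} \<subseteq> {..<length Pi} \<and>
     (\<forall>i. i + 1 < b \<longrightarrow> precedes (Pi ! q i) (v i) (v (i + 1))) \<and>
     precedes (Pi ! q (b - 1)) (v 0) (v (b - 1)))"

definition girth_gt :: "nat set \<Rightarrow> nat list list \<Rightarrow> enat \<Rightarrow> bool" where
  "girth_gt V Pi k \<longleftrightarrow> (\<forall>b. has_bridge V Pi b \<longrightarrow> enat b > k)"

definition no_2cycle :: "nat list list \<Rightarrow> bool" where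
  "no_2cycle Pi \<longleftrightarrow> \<not> (\<exists>u v i j. i < length Pi \<and> j < length Pi \<and>
      precedes (Pi ! i) u v \<and> precedes (Pi ! j) v u)"

definition beta :: "nat \<Rightarrow> nat \<Rightarrow> enat \<Rightarrow> nat" where
  "beta n p k = Max {ps_size Pi | V Pi. path_system V Pi \<and> card V = n \<and> length Pi = p
                                        \<and> girth_gt V Pi k}"

end

theory Submission
  imports Defs
begin

text \<open>Start from an extremal system of bridge girth \<open>> k \<ge> 3\<close>, hence without 2- and
  3-bridges. Call two incidences \<open>(i, x)\<close>, \<open>(j, x)\<close> of the same node conflicting when
  paths \<open>i\<close> and \<open>j\<close> form a 2-cycle through \<open>x\<close>. For fixed \<open>(i, x)\<close> there is at most
  one conflicting path \<open>j\<close> that returns to \<open>x\<close> from a node after \<open>x\<close> on path \<open>i\<close>, and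
  at most one that leaves \<open>x\<close> towards a node before it: two of either kind would
  close a 2- or 3-bridge. So the conflict graph has maximum degree 2, and a greedy
  independent set keeps a third of all incidences. Deleting the other incidences only
  removes nodes from paths, which cannot create bridges, and any surviving 2-cycle
  would be a conflict between two kept incidences.\<close>

lemma precedes_Nil [simp]: "\<not> precedes [] x y"
  unfolding precedes_def by simp

lemma precedes_Cons [simp]:
  "precedes (a # xs) x y \<longleftrightarrow> a = x \<and> y \<in> set xs \<or> precedes xs x y"
proof
  assume "precedes (a # xs) x y"
  then obtain i j where "i < j" "j < Suc (length xs)" "(a # xs) ! i = x" "(a # xs) ! j = y"
    unfolding precedes_def by auto
  then show "a = x \<and> y \<in> set xs \<or> precedes xs x y"
    unfolding precedes_def by (cases i; cases j) auto
next
  assume "a = x \<and> y \<in> set xs \<or> precedes xs x y"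
  then show "precedes (a # xs) x y"
    unfolding precedes_def in_set_conv_nth
    by (metis Suc_less_eq length_Cons nth_Cons_0 nth_Cons_Suc zero_less_Suc)
qed

lemma precedes_imp_in_set: "precedes xs x y \<Longrightarrow> x \<in> set xs \<and> y \<in> set xs"
  by (induction xs) auto

lemma precedes_neq: "distinct xs \<Longrightarrow> precedes xs x y \<Longrightarrow> x \<noteq> y"
  by (induction xs) (auto dest: precedes_imp_in_set)

lemma precedes_asym: "distinct xs \<Longrightarrow> precedes xs x y \<Longrightarrow> \<not> precedes xs y x"
  by (induction xs) (auto dest: precedes_imp_in_set)

lemma precedes_total:
  "x \<in> set xs \<Longrightarrow> y \<in> set xs \<Longrightarrow> x \<noteq> y \<Longrightarrow> precedes xs x y \<or> precedes xs y x"
  by (induction xs) auto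

lemma precedes_filter: "precedes (filter P xs) x y \<Longrightarrow> precedes xs x y \<and> P x \<and> P y"
  by (induction xs) (auto dest: precedes_imp_in_set split: if_splits)

lemma greedy_independent_subset:
  assumes "finite A" and "symp E" and "\<And>a. a \<in> A \<Longrightarrow> card {b \<in> A - {a}. E a b} \<le> d"
  shows "\<exists>I \<subseteq> A. (\<forall>a \<in> I. \<forall>b \<in> I. a \<noteq> b \<longrightarrow> \<not> E a b) \<and> card A \<le> (d + 1) * card I"
  using assms(1,3)
proof (induction A rule: finite_psubset_induct)
  case (psubset A)
  show ?case
  proof (cases "A = {}")
    case False
    then obtain a where a: "a \<in> A" by blast
    define N where "N = insert a {b \<in> A - {a}. E a b}"
    have "N \<subseteq> A" using a by (auto simp: N_def)
    have card_N: "card N \<le> d + 1"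
      using psubset.prems[OF a] psubset.hyps(1) by (simp add: N_def card_insert_if)
    have "A - N \<subset> A" using a by (auto simp: N_def)
    have deg: "card {b \<in> A - N - {c}. E c b} \<le> d" if "c \<in> A - N" for c
    proof -
      have "card {b \<in> A - N - {c}. E c b} \<le> card {b \<in> A - {c}. E c b}"
        using psubset.hyps(1) by (intro card_mono) auto
      then show ?thesis using psubset.prems[of c] that by simp
    qed
    obtain I where I: "I \<subseteq> A - N" "\<forall>a \<in> I. \<forall>b \<in> I. a \<noteq> b \<longrightarrow> \<not> E a b"
      "card (A - N) \<le> (d + 1) * card I"
      using psubset.IH[OF \<open>A - N \<subset> A\<close> deg] by blast
    have "a \<notin> I" and "finite I" using I(1) psubset.hyps(1) finite_subset by (auto simp: N_def)
    have "\<not> E a b" and "\<not> E b a" if "b \<in> I" for b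
      using that I(1) sympD[OF \<open>symp E\<close>, of b a] by (auto simp: N_def)
    then have "\<forall>b \<in> insert a I. \<forall>c \<in> insert a I. b \<noteq> c \<longrightarrow> \<not> E b c"
      using I(2) by blast
    moreover have "card A \<le> (d + 1) * card (insert a I)"
    proof -
      have "card A = card (A - N) + card N"
        using \<open>N \<subseteq> A\<close> psubset.hyps(1)
        by (metis card_Diff_subset card_mono finite_subset le_add_diff_inverse2)
      also have "\<dots> \<le> (d + 1) * card I + (d + 1)" using I(3) card_N by linarith
      also have "\<dots> = (d + 1) * card (insert a I)" using \<open>a \<notin> I\<close> \<open>finite I\<close> by simp
      finally show ?thesis .
    qed
    ultimately show ?thesis using I(1) a by (intro exI[of _ "insert a I"]) auto
  qed simp
qed

lemma path_system_nth:
  "path_system V Pi \<Longrightarrow> i < length Pi \<Longrightarrow> distinct (Pi ! i) \<and> set (Pi ! i) \<subseteq> V"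
  unfolding path_system_def by simp

lemma has_bridge_2I:
  assumes "path_system V Pi" and "i < length Pi" "j < length Pi" "i \<noteq> j"
    and "precedes (Pi ! i) a b" "precedes (Pi ! j) a b"
  shows "has_bridge V Pi 2"
proof -
  have "distinct (Pi ! i)" "set (Pi ! i) \<subseteq> V"
    using path_system_nth[OF assms(1,2)] by auto
  then have "a \<noteq> b" "a \<in> V" "b \<in> V"
    using precedes_neq precedes_imp_in_set assms(5) by blast+
  then show ?thesis
    unfolding has_bridge_def using assms
    by (intro conjI exI[of _ "(!) [a, b]"] exI[of _ "(!) [i, j]"])
      (auto simp: inj_on_nth lessThan_Suc numeral_2_eq_2)
qed

lemma has_bridge_3I:
  assumes "path_system V Pi" and "i < length Pi" "j < length Pi" "l < length Pi"
    and "distinct [i, j, l]"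
    and "precedes (Pi ! i) a b" "precedes (Pi ! j) b c" "precedes (Pi ! l) a c"
  shows "has_bridge V Pi 3"
proof -
  have "distinct (Pi ! i)" "distinct (Pi ! j)" "distinct (Pi ! l)"
    and "set (Pi ! i) \<union> set (Pi ! j) \<subseteq> V"
    using path_system_nth[OF assms(1)] assms(2-4) by auto
  then have nodes: "distinct [a, b, c]" "{a, b, c} \<subseteq> V"
    using precedes_neq[of _ a b] precedes_neq[of _ b c] precedes_neq[of _ a c]
      precedes_imp_in_set[OF assms(6)] precedes_imp_in_set[OF assms(7)] assms(6-8)
    by auto
  have three: "{..<3} = {0, 1, 2::nat}" by auto
  have steps: "precedes (Pi ! ([i, j, l] ! t)) ([a, b, c] ! t) ([a, b, c] ! (t + 1))"
    if "t + 1 < 3" for t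
    using that assms(6,7) by (cases t) (auto simp: less_Suc_eq)
  show ?thesis
    unfolding has_bridge_def
    by (rule conjI, simp, rule exI[of _ "(!) [a, b, c]"], rule exI[of _ "(!) [i, j, l]"])
      (use nodes steps assms(2-5,8) in \<open>simp add: three inj_on_nth\<close>)
qed

lemma has_bridge_mono:
  assumes "length Pi' = length Pi"
    and "\<And>i x y. i < length Pi \<Longrightarrow> precedes (Pi' ! i) x y \<Longrightarrow> precedes (Pi ! i) x y"
    and "has_bridge V Pi' b"
  shows "has_bridge V Pi b"
proof -
  obtain v q where "b \<ge> 1" "inj_on v {..<b}" "v ` {..<b} \<subseteq> V" "inj_on q {..<b}"
    and q: "q ` {..<b} \<subseteq> {..<length Pi}"
    and "\<forall>i. i + 1 < b \<longrightarrow> precedes (Pi' ! q i) (v i) (v (i + 1))"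
    and "precedes (Pi' ! q (b - 1)) (v 0) (v (b - 1))"
    using assms(1,3) unfolding has_bridge_def by auto
  moreover have "q t < length Pi" if "t < b" for t
    using q that by auto
  ultimately show ?thesis
    unfolding has_bridge_def using assms(2)
    by (intro conjI exI[of _ v] exI[of _ q]) auto
qed

lemma girth_gt_mono:
  assumes "length Pi' = length Pi"
    and "\<And>i x y. i < length Pi \<Longrightarrow> precedes (Pi' ! i) x y \<Longrightarrow> precedes (Pi ! i) x y"
    and "girth_gt V Pi k"
  shows "girth_gt V Pi' k"
  using assms has_bridge_mono unfolding girth_gt_def by blast

lemma girth_gt_imp_no_bridge: "girth_gt V Pi k \<Longrightarrow> enat b \<le> k \<Longrightarrow> \<not> has_bridge V Pi b"
  unfolding girth_gt_def by (meson leD)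

lemma card_2cycle_partners_ahead_le_1:
  assumes ps: "path_system V Pi" and "\<not> has_bridge V Pi 2" "\<not> has_bridge V Pi 3"
    and i: "i < length Pi"
  shows "card {j. j < length Pi \<and> j \<noteq> i \<and> (\<exists>z. precedes (Pi ! i) x z \<and> precedes (Pi ! j) z x)} \<le> 1"
    (is "card ?J \<le> 1")
proof -
  have "j1 = j2" if J: "j1 \<in> ?J" "j2 \<in> ?J" for j1 j2
  proof (rule ccontr)
    assume "j1 \<noteq> j2"
    obtain z1 z2 where j: "j1 < length Pi" "j2 < length Pi" "distinct [i, j1, j2]"
      and z: "precedes (Pi ! i) x z1" "precedes (Pi ! j1) z1 x"
        "precedes (Pi ! i) x z2" "precedes (Pi ! j2) z2 x"
      using J \<open>j1 \<noteq> j2\<close> by auto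
    have "z1 \<in> set (Pi ! i)" "z2 \<in> set (Pi ! i)"
      using z(1,3) precedes_imp_in_set by auto
    then consider "z1 = z2" | "precedes (Pi ! i) z1 z2" | "precedes (Pi ! i) z2 z1"
      using precedes_total by blast
    then show False
    proof cases
      case 1
      then show False using has_bridge_2I[OF ps j(1,2) \<open>j1 \<noteq> j2\<close> z(2)] z(4) assms(2) by simp
    next
      case 2
      then show False using has_bridge_3I[OF ps i j(2,1) _ 2 z(4,2)] j(3) assms(3) by auto
    next
      case 3
      then show False using has_bridge_3I[OF ps i j(1,2) _ 3 z(2,4)] j(3) assms(3) by auto
    qed
  qed
  moreover have "finite ?J" by simp
  ultimately show ?thesis by (simp add: card_le_Suc0_iff_eq)
qed

lemma card_2cycle_partners_behind_le_1:
  assumes ps: "path_system V Pi" and "\<not> has_bridge V Pi 2" "\<not> has_bridge V Pi 3"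
    and i: "i < length Pi"
  shows "card {j. j < length Pi \<and> j \<noteq> i \<and> (\<exists>z. precedes (Pi ! i) z x \<and> precedes (Pi ! j) x z)} \<le> 1"
    (is "card ?J \<le> 1")
proof -
  have "j1 = j2" if J: "j1 \<in> ?J" "j2 \<in> ?J" for j1 j2
  proof (rule ccontr)
    assume "j1 \<noteq> j2"
    obtain z1 z2 where j: "j1 < length Pi" "j2 < length Pi" "distinct [i, j1, j2]"
      and z: "precedes (Pi ! i) z1 x" "precedes (Pi ! j1) x z1"
        "precedes (Pi ! i) z2 x" "precedes (Pi ! j2) x z2"
      using J \<open>j1 \<noteq> j2\<close> by auto
    have "z1 \<in> set (Pi ! i)" "z2 \<in> set (Pi ! i)"
      using z(1,3) precedes_imp_in_set by auto
    then consider "z1 = z2" | "precedes (Pi ! i) z1 z2" | "precedes (Pi ! i) z2 z1"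
      using precedes_total by blast
    then show False
    proof cases
      case 1
      then show False using has_bridge_2I[OF ps j(1,2) \<open>j1 \<noteq> j2\<close> z(2)] z(4) assms(2) by simp
    next
      case 2
      then show False using has_bridge_3I[OF ps j(1) i j(2) _ z(2) 2 z(4)] j(3) assms(3) by auto
    next
      case 3
      then show False using has_bridge_3I[OF ps j(2) i j(1) _ z(4) 3 z(2)] j(3) assms(3) by auto
    qed
  qed
  moreover have "finite ?J" by simp
  ultimately show ?thesis by (simp add: card_le_Suc0_iff_eq)
qed

definition incidences :: "nat list list \<Rightarrow> (nat \<times> nat) set" where
  "incidences Pi = (SIGMA i:{..<length Pi}. set (Pi ! i))"

lemma card_incidences: "path_system V Pi \<Longrightarrow> card (incidences Pi) = ps_size Pi"
proof -
  assume ps: "path_system V Pi"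
  have "card (incidences Pi) = (\<Sum>i<length Pi. card (set (Pi ! i)))"
    unfolding incidences_def by (simp add: card_SigmaI)
  also have "\<dots> = (\<Sum>i<length Pi. length (Pi ! i))"
    using path_system_nth[OF ps] distinct_card by (intro sum.cong) auto
  also have "\<dots> = ps_size Pi"
    unfolding ps_size_def by (simp add: sum_list_sum_nth atLeast0LessThan)
  finally show ?thesis .
qed

fun conflict :: "nat list list \<Rightarrow> nat \<times> nat \<Rightarrow> nat \<times> nat \<Rightarrow> bool" where
  "conflict Pi (i, x) (j, y) \<longleftrightarrow> x = y \<and>
     (\<exists>z. precedes (Pi ! i) x z \<and> precedes (Pi ! j) z x \<or>
          precedes (Pi ! i) z x \<and> precedes (Pi ! j) x z)"

lemma symp_conflict: "symp (conflict Pi)"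
  unfolding symp_def by auto

lemma card_conflicts_le_2:
  assumes ps: "path_system V Pi" and "\<not> has_bridge V Pi 2" "\<not> has_bridge V Pi 3"
    and "a \<in> incidences Pi"
  shows "card {b \<in> incidences Pi - {a}. conflict Pi a b} \<le> 2"
proof -
  obtain i x where a: "a = (i, x)" and i: "i < length Pi"
    using assms(4) by (auto simp: incidences_def)
  define ahead where
    "ahead = {j. j < length Pi \<and> j \<noteq> i \<and> (\<exists>z. precedes (Pi ! i) x z \<and> precedes (Pi ! j) z x)}"
  define behind where
    "behind = {j. j < length Pi \<and> j \<noteq> i \<and> (\<exists>z. precedes (Pi ! i) z x \<and> precedes (Pi ! j) x z)}"
  have "{b \<in> incidences Pi - {a}. conflict Pi a b} \<subseteq> (ahead \<union> behind) \<times> {x}"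
    by (auto simp: a incidences_def ahead_def behind_def)
  moreover have "finite (ahead \<union> behind)"
    by (auto simp: ahead_def behind_def)
  ultimately have "card {b \<in> incidences Pi - {a}. conflict Pi a b} \<le> card (ahead \<union> behind)"
    using card_mono[of "(ahead \<union> behind) \<times> {x}"] by (simp add: card_cartesian_product)
  also have "\<dots> \<le> card ahead + card behind" by (rule card_Un_le)
  also have "\<dots> \<le> 2"
    using card_2cycle_partners_ahead_le_1[OF assms(1-3) i, of x]
      card_2cycle_partners_behind_le_1[OF assms(1-3) i, of x]
    unfolding ahead_def behind_def by linarith
  finally show ?thesis .
qed

definition restrict_paths :: "(nat \<times> nat) set \<Rightarrow> nat list list \<Rightarrow> nat list list" where
  "restrict_paths I Pi = map (\<lambda>i. filter (\<lambda>x. (i, x) \<in> I) (Pi ! i)) [0..<length Pi]"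

lemma length_restrict_paths [simp]: "length (restrict_paths I Pi) = length Pi"
  by (simp add: restrict_paths_def)

lemma nth_restrict_paths [simp]:
  "i < length Pi \<Longrightarrow> restrict_paths I Pi ! i = filter (\<lambda>x. (i, x) \<in> I) (Pi ! i)"
  by (simp add: restrict_paths_def)

lemma path_system_restrict_paths: "path_system V Pi \<Longrightarrow> path_system V (restrict_paths I Pi)"
  unfolding path_system_def restrict_paths_def by auto

lemma precedes_restrict_paths:
  "i < length Pi \<Longrightarrow> precedes (restrict_paths I Pi ! i) x y \<Longrightarrow>
     precedes (Pi ! i) x y \<and> (i, x) \<in> I \<and> (i, y) \<in> I"
  using precedes_filter[of "\<lambda>x. (i, x) \<in> I" "Pi ! i" x y] by simp

lemma incidences_restrict_paths:
  "I \<subseteq> incidences Pi \<Longrightarrow> incidences (restrict_paths I Pi) = I"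
  unfolding incidences_def by auto

lemma no_2cycle_restrict_paths:
  assumes "path_system V Pi" and "\<forall>a \<in> I. \<forall>b \<in> I. a \<noteq> b \<longrightarrow> \<not> conflict Pi a b"
  shows "no_2cycle (restrict_paths I Pi)"
  unfolding no_2cycle_def length_restrict_paths
proof (intro notI, elim exE conjE)
  fix u v i j
  assume "i < length Pi" "j < length Pi"
    and "precedes (restrict_paths I Pi ! i) u v" "precedes (restrict_paths I Pi ! j) v u"
  then have "precedes (Pi ! i) u v" "precedes (Pi ! j) v u" "(i, u) \<in> I" "(j, u) \<in> I"
    using precedes_restrict_paths by blast+
  moreover have "i \<noteq> j"
    using calculation(1,2) precedes_asym path_system_nth[OF assms(1) \<open>i < length Pi\<close>] by blast
  ultimately show False using assms(2) by fastforce
qed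

lemma exists_2cycle_free_subsystem:
  assumes ps: "path_system V Pi" and girth: "girth_gt V Pi k" and "k \<ge> 3"
  obtains Pi' where "path_system V Pi'" "length Pi' = length Pi" "girth_gt V Pi' k"
    "no_2cycle Pi'" "ps_size Pi \<le> 3 * ps_size Pi'"
proof -
  have "enat 3 \<le> k" using \<open>k \<ge> 3\<close> by (simp add: numeral_eq_enat)
  then have "\<not> has_bridge V Pi 2" "\<not> has_bridge V Pi 3"
    using girth_gt_imp_no_bridge[OF girth] order_trans[of "enat 2" "enat 3" k] by simp_all
  then obtain I where I: "I \<subseteq> incidences Pi" "\<forall>a \<in> I. \<forall>b \<in> I. a \<noteq> b \<longrightarrow> \<not> conflict Pi a b"
    and card_I: "card (incidences Pi) \<le> (2 + 1) * card I"
    using greedy_independent_subset[OF _ symp_conflict card_conflicts_le_2[OF ps]]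
    by (force simp: incidences_def)
  let ?Pi' = "restrict_paths I Pi"
  have ps': "path_system V ?Pi'" by (rule path_system_restrict_paths[OF ps])
  show ?thesis
  proof
    show "path_system V ?Pi'" by (fact ps')
    show "girth_gt V ?Pi' k"
      by (rule girth_gt_mono[OF length_restrict_paths _ girth]) (metis precedes_restrict_paths)
    show "no_2cycle ?Pi'" by (rule no_2cycle_restrict_paths[OF ps I(2)])
    have "ps_size ?Pi' = card I"
      using card_incidences[OF ps'] incidences_restrict_paths[OF I(1)] by simp
    then show "ps_size Pi \<le> 3 * ps_size ?Pi'"
      using card_I card_incidences[OF ps] by simp
  qed simp
qed

lemma ps_size_le_length_mult_card:
  assumes "path_system V Pi"
  shows "ps_size Pi \<le> length Pi * card V"
proof -
  have "card (incidences Pi) \<le> card ({..<length Pi} \<times> V)"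
    using assms path_system_nth[OF assms]
    by (intro card_mono) (auto simp: incidences_def path_system_def)
  then show ?thesis by (simp add: card_incidences[OF assms] card_cartesian_product)
qed

lemma
  fixes n p :: nat and k :: enat
  defines "sizes \<equiv> {ps_size Pi | V Pi. path_system V Pi \<and> card V = n \<and> length Pi = p \<and> girth_gt V Pi k}"
  shows finite_beta_sizes: "finite sizes"
    and beta_sizes_nonempty: "sizes \<noteq> {}"
proof -
  show "finite sizes"
    unfolding sizes_def
    by (rule finite_subset[of _ "{..p * n}"]) (auto dest!: ps_size_le_length_mult_card)
  have "\<not> has_bridge V (replicate p []) b" for V b
  proof
    assume "has_bridge V (replicate p []) b"
    then obtain v q where "b \<ge> 1" "q ` {..<b} \<subseteq> {..<p}"
      and "precedes (replicate p [] ! q (b - 1)) (v 0) (v (b - 1))"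
      unfolding has_bridge_def by auto
    moreover have "q (b - 1) < p" using calculation(1,2) by (auto simp: image_subset_iff)
    ultimately show False by simp
  qed
  then have "path_system {..<n} (replicate p [])" "girth_gt {..<n} (replicate p []) k"
    by (simp_all add: path_system_def girth_gt_def)
  then show "sizes \<noteq> {}" unfolding sizes_def by fastforce
qed

lemma beta_attained:
  "\<exists>V Pi. path_system V Pi \<and> card V = n \<and> length Pi = p \<and> girth_gt V Pi k \<and>
     ps_size Pi = beta n p k"
  using Max_in[OF finite_beta_sizes[of n p k] beta_sizes_nonempty[of n p k]]
  unfolding beta_def by fastforce

lemma ps_size_le_beta:
  "path_system V Pi \<Longrightarrow> girth_gt V Pi k \<Longrightarrow> ps_size Pi \<le> beta (card V) (length Pi) k"
  unfolding beta_def by (rule Max_ge[OF finite_beta_sizes]) blast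

theorem lemma3p10:
  shows "\<exists>c::real. c > 0 \<and> (\<forall>(n::nat) (p::nat) (k::enat). n \<ge> 1 \<and> p \<ge> 1 \<and> k \<ge> 3 \<longrightarrow>
     (\<exists>V Pi. path_system V Pi \<and> card V = n \<and> length Pi = p \<and> girth_gt V Pi k \<and>
        no_2cycle Pi \<and> c * real (beta n p k) \<le> real (ps_size Pi) \<and> ps_size Pi \<le> beta n p k))"
proof (intro exI[of _ "1 / 3"] conjI allI impI)
  fix n p :: nat and k :: enat
  assume "n \<ge> 1 \<and> p \<ge> 1 \<and> k \<ge> 3"
  then have "k \<ge> 3" by simp
  obtain V Pi where ps: "path_system V Pi" and "card V = n" "length Pi = p"
    and girth: "girth_gt V Pi k" and extremal: "ps_size Pi = beta n p k"
    using beta_attained by blast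
  obtain Pi' where ps': "path_system V Pi'" and "length Pi' = length Pi"
    and girth': "girth_gt V Pi' k" and "no_2cycle Pi'" and third: "ps_size Pi \<le> 3 * ps_size Pi'"
    by (rule exists_2cycle_free_subsystem[OF ps girth \<open>k \<ge> 3\<close>])
  have "real (beta n p k) \<le> 3 * real (ps_size Pi')"
    using third extremal of_nat_mono by fastforce
  moreover have "ps_size Pi' \<le> beta n p k"
    using ps_size_le_beta[OF ps' girth'] \<open>card V = n\<close> \<open>length Pi' = length Pi\<close> \<open>length Pi = p\<close>
    by simp
  ultimately show "\<exists>V Pi. path_system V Pi \<and> card V = n \<and> length Pi = p \<and> girth_gt V Pi k \<and>
      no_2cycle Pi \<and> 1 / 3 * real (beta n p k) \<le> real (ps_size Pi) \<and> ps_size Pi \<le> beta n p k"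
    using ps' girth' \<open>no_2cycle Pi'\<close> \<open>card V = n\<close> \<open>length Pi' = length Pi\<close> \<open>length Pi = p\<close>
    by (intro exI[of _ V] exI[of _ Pi']) simp
qed simp

end
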